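(* Let $R\ge1$ and let $G$ be an observable of $R$ replicas. For every finite box $\Lambda$ and every $\beta$, $$\Delta_1 G=-\beta\Big\langle G\Big[\sum_{\substack{k,l=1\\k\ne l}}^{R}q_{l,k}-2R\sum_{l=1}^{R}q_{l,R+1}+R(R+1)\,q_{R+1,R+2}\Big]\Big\rangle,$$ where $\Delta_1 G=\sum_{l=1}^{R}\mathrm{Av}\big(\Omega_R[h(\sigma^{(l)})G]-\Omega_R[h(\sigma^{(l)})]\,\Omega_R[G]\big)$ and $h(\sigma)=H_\Lambda(\sigma)/|\Lambda|$.
   Context: For each finite $d$-dimensional parallelepiped $\Lambda\subset\mathbb{Z}^d$ let $\Sigma_\Lambda=\{-1,1\}^\Lambda$, and for $X\subset\Lambda$ let $\sigma_X=\prod_{i\in X}\sigma_i$ (with $\sigma_\emptyset=0$). Let $\{J_X\}$ be independent centered Gaussian random variables with variances $\mathrm{Av}(J_X^2)=\Delta_X^2$, translation invariant, where $\mathrm{Av}$ denotes expectation over the $J$'s. The Hamiltonian is $H_\Lambda(\sigma)=-\sum_{X\subset\Lambda}J_X\sigma_X$, with normalized covariance $c_\Lambda(\sigma,\tau)=\frac{1}{|\Lambda|}\sum_{X\subset\Lambda}\Delta_X^2\sigma_X\tau_X$. Let $\mathcal{Z}(\beta)=\sum_{\sigma}e^{-\beta H_\Lambda(\sigma)}$ and for $n\ge1$ the $n$-replica random Gibbs state $\Omega_n(f)=\sum_{\sigma^{(1)},\dots,\sigma^{(n)}}f\,e^{-\beta\sum_{i=1}^n H_\Lambda(\sigma^{(i)})}/\mathcal{Z}(\beta)^n$.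 An observable of $R$ replicas is a smooth function $G$ of an $R\times R$ real matrix with $|G|\le1$, evaluated at $(c_\Lambda(\sigma^{(k)},\sigma^{(l)}))_{k,l\le R}$. Notation: $\langle G\,q_{k,l}\rangle=\mathrm{Av}\,\Omega_n\big(G((c_\Lambda(\sigma^{(i)},\sigma^{(j)}))_{i,j\le R})\,c_\Lambda(\sigma^{(k)},\sigma^{(l)})\big)$ with $n=\max(R,k,l)$, extended linearly to sums. *)

theory Defs
  imports "HOL-Probability.Probability"
begin

text \<open>Smooth (C-infinity) real functions on a Euclidean space: differentiable everywhere,
  and every partial derivative is again smooth (coinductively: derivatives of all orders exist).\<close>
coinductive smooth_fun :: "('a::euclidean_space \<Rightarrow> real) \<Rightarrow> bool" where
  "f differentiable_on UNIV \<Longrightarrow>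
   (\<forall>b\<in>Basis. smooth_fun (\<lambda>x. frechet_derivative f (at x) b)) \<Longrightarrow> smooth_fun f"

definition box_set :: "int^'d \<Rightarrow> int^'d \<Rightarrow> (int^'d) set" where
  "box_set a b = {x. \<forall>i. a $ i \<le> x $ i \<and> x $ i \<le> b $ i}"

definition configs :: "'p set \<Rightarrow> ('p \<Rightarrow> real) set" where
  "configs L = PiE L (\<lambda>_. {-1, 1})"

text \<open>sigma_X, with the convention sigma_empty = 0.\<close>
definition sigX :: "('p \<Rightarrow> real) \<Rightarrow> 'p set \<Rightarrow> real" where
  "sigX \<sigma> X = (if X = {} then 0 else (\<Prod>i\<in>X. \<sigma> i))"

definition Ham :: "'p set \<Rightarrow> ('p set \<Rightarrow> real) \<Rightarrow> ('p \<Rightarrow> real) \<Rightarrow> real" where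
  "Ham L J \<sigma> = - (\<Sum>X\<in>Pow L. J X * sigX \<sigma> X)"

text \<open>Normalized covariance c_Lambda; Delta X is the standard deviation of J_X.\<close>
definition cov :: "'p set \<Rightarrow> ('p set \<Rightarrow> real) \<Rightarrow> ('p \<Rightarrow> real) \<Rightarrow> ('p \<Rightarrow> real) \<Rightarrow> real" where
  "cov L \<Delta> \<sigma> \<tau> = (1 / real (card L)) * (\<Sum>X\<in>Pow L. (\<Delta> X)\<^sup>2 * sigX \<sigma> X * sigX \<tau> X)"

definition Zpart :: "'p set \<Rightarrow> ('p set \<Rightarrow> real) \<Rightarrow> real \<Rightarrow> real" where
  "Zpart L J \<beta> = (\<Sum>\<sigma>\<in>configs L. exp (- \<beta> * Ham L J \<sigma>))"

definition Omega :: "'p set \<Rightarrow> ('p set \<Rightarrow> real) \<Rightarrow> real \<Rightarrow> nat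
    \<Rightarrow> ((nat \<Rightarrow> 'p \<Rightarrow> real) \<Rightarrow> real) \<Rightarrow> real" where
  "Omega L J \<beta> n f =
     (\<Sum>s\<in>PiE {1..n} (\<lambda>_. configs L). f s * exp (- \<beta> * (\<Sum>i=1..n. Ham L J (s i))))
       / (Zpart L J \<beta>) ^ n"

text \<open>Average over the disorder: J_X = Delta X * g_X with g_X (X subset of L) i.i.d. standard Gaussians.\<close>
definition Av :: "'p set \<Rightarrow> ('p set \<Rightarrow> real) \<Rightarrow> (('p set \<Rightarrow> real) \<Rightarrow> real) \<Rightarrow> real" where
  "Av L \<Delta> F = (\<integral>g. F (\<lambda>X. \<Delta> X * g X) \<partial>(PiM (Pow L) (\<lambda>_. density lborel std_normal_density)))"

text \<open>Observable of R replicas evaluated on replica configurations s;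
  iota enumerates the matrix index type as the replicas 1..R.\<close>
definition obs :: "'p set \<Rightarrow> ('p set \<Rightarrow> real) \<Rightarrow> ('r \<Rightarrow> nat) \<Rightarrow> (real^'r^'r \<Rightarrow> real)
    \<Rightarrow> (nat \<Rightarrow> 'p \<Rightarrow> real) \<Rightarrow> real" where
  "obs L \<Delta> \<iota> G s = G (\<chi> a b. cov L \<Delta> (s (\<iota> a)) (s (\<iota> b)))"

definition bracket :: "'p set \<Rightarrow> ('p set \<Rightarrow> real) \<Rightarrow> real \<Rightarrow> nat \<Rightarrow> ('r \<Rightarrow> nat)
    \<Rightarrow> (real^'r^'r \<Rightarrow> real) \<Rightarrow> nat \<Rightarrow> nat \<Rightarrow> real" where
  "bracket L \<Delta> \<beta> R \<iota> G k l =
     Av L \<Delta> (\<lambda>J. Omega L J \<beta> (max R (max k l))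
        (\<lambda>s. obs L \<Delta> \<iota> G s * cov L \<Delta> (s k) (s l)))"

definition Delta1 :: "'p set \<Rightarrow> ('p set \<Rightarrow> real) \<Rightarrow> real \<Rightarrow> nat \<Rightarrow> ('r \<Rightarrow> nat)
    \<Rightarrow> (real^'r^'r \<Rightarrow> real) \<Rightarrow> real" where
  "Delta1 L \<Delta> \<beta> R \<iota> G =
     (\<Sum>l=1..R. Av L \<Delta> (\<lambda>J.
        Omega L J \<beta> R (\<lambda>s. Ham L J (s l) / real (card L) * obs L \<Delta> \<iota> G s)
        - Omega L J \<beta> R (\<lambda>s. Ham L J (s l) / real (card L)) * Omega L J \<beta> R (obs L \<Delta> \<iota> G)))"

end

theory Submission
  imports Defs "HOL-Real_Asymp.Real_Asymp"
begin

(*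
  Write the normalized energy as h(sigma) = -|L|^-1 * sum_X J_X sigma_X. Since replicas are
  independent under the product Gibbs state, the covariance of h(sigma^l) and G is
  -|L|^-1 * sum_X J_X Omega_{R+1}(G (sigma^l_X - sigma^{R+1}_X)). Gaussian integration by parts,
  Av(J_X F(J)) = Delta_X^2 Av(dF/dJ_X), combined with
  d/dJ_X Omega_n(f) = beta Omega_{n+1}(f (sum_{i<=n} sigma^i_X - n sigma^{n+1}_X)),
  turns every term into a Gibbs average of G times an overlap over R+2 replicas once the sum
  over X is carried out. The self-overlaps q_{l,l} = q_{R+1,R+1} do not depend on the
  configuration and cancel, and exchangeability of the replicas not seen by G identifies what
  remains with the brackets < G q_{k,l} >.
*)

section \<open>Replica Gibbs states\<close>

lemma finite_configs: "finite L \<Longrightarrow> finite (configs L)"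
  unfolding configs_def by (intro finite_PiE) auto

lemma configs_not_empty: "configs L \<noteq> {}"
  unfolding configs_def by (simp add: PiE_eq_empty_iff)

lemma Zpart_pos: "finite L \<Longrightarrow> 0 < Zpart L J \<beta>"
  unfolding Zpart_def by (intro sum_pos finite_configs configs_not_empty) auto

lemma sum_PiE_insert:
  assumes "finite A" "a \<notin> A" "finite (B a)"
  shows "(\<Sum>g\<in>PiE (insert a A) B. F g) = (\<Sum>y\<in>B a. \<Sum>g\<in>PiE A B. F (g(a := y)))"
proof -
  have "(\<Sum>g\<in>PiE (insert a A) B. F g) = (\<Sum>(y, g)\<in>B a \<times> PiE A B. F (g(a := y)))"
    unfolding PiE_insert_eq using inj_combinator[OF assms(2)]
    by (subst sum.reindex) (auto simp: case_prod_beta)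
  then show ?thesis
    by (simp add: sum.cartesian_product)
qed

lemma Omega_cong:
  "(\<And>s. s \<in> PiE {1..n} (\<lambda>_. configs L) \<Longrightarrow> f s = g s) \<Longrightarrow> Omega L J \<beta> n f = Omega L J \<beta> n g"
  unfolding Omega_def by (auto intro!: sum.cong)

lemma Omega_add: "Omega L J \<beta> n (\<lambda>s. f s + g s) = Omega L J \<beta> n f + Omega L J \<beta> n g"
  unfolding Omega_def by (simp add: distrib_right sum.distrib add_divide_distrib)

lemma Omega_diff: "Omega L J \<beta> n (\<lambda>s. f s - g s) = Omega L J \<beta> n f - Omega L J \<beta> n g"
  unfolding Omega_def by (simp add: left_diff_distrib sum_subtractf diff_divide_distrib)

lemma Omega_cmult: "Omega L J \<beta> n (\<lambda>s. c * f s) = c * Omega L J \<beta> n f"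
  unfolding Omega_def by (simp add: mult.assoc sum_distrib_left[symmetric])

lemma Omega_minus: "Omega L J \<beta> n (\<lambda>s. - f s) = - Omega L J \<beta> n f"
  using Omega_cmult[of L J \<beta> n "-1" f] by simp

lemma Omega_sum:
  "finite A \<Longrightarrow> Omega L J \<beta> n (\<lambda>s. \<Sum>a\<in>A. f a s) = (\<Sum>a\<in>A. Omega L J \<beta> n (f a))"
  by (induction A rule: finite_induct) (simp_all add: Omega_add, simp add: Omega_def)

lemma Omega_one_replica:
  assumes "finite L"
  shows "Omega L J \<beta> 1 (\<lambda>s. u (s 1)) = (\<Sum>\<sigma>\<in>configs L. u \<sigma> * exp (- \<beta> * Ham L J \<sigma>)) / Zpart L J \<beta>"
proof -
  have "{1..1::nat} = insert 1 {}" by auto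
  then show ?thesis
    unfolding Omega_def using assms by (simp add: sum_PiE_insert finite_configs)
qed

lemma Omega_one_replica_const: "finite L \<Longrightarrow> Omega L J \<beta> 1 (\<lambda>_. 1) = 1"
  using Omega_one_replica[of L J \<beta> "\<lambda>_. 1"] Zpart_pos[of L J \<beta>] by (simp add: Zpart_def)

lemma Omega_Suc_mult:
  assumes L: "finite L" and f: "\<And>s y. f (s(Suc n := y)) = f s"
  shows "Omega L J \<beta> (Suc n) (\<lambda>s. f s * u (s (Suc n)))
    = Omega L J \<beta> n f * Omega L J \<beta> 1 (\<lambda>s. u (s 1))"
proof -
  let ?w = "\<lambda>\<sigma>. exp (- \<beta> * Ham L J \<sigma>)"
  let ?P = "PiE {1..n} (\<lambda>_. configs L)"
  have "{1..Suc n} = insert (Suc n) {1..n}" by auto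
  then have "(\<Sum>s\<in>PiE {1..Suc n} (\<lambda>_. configs L). f s * u (s (Suc n)) * exp (- \<beta> * (\<Sum>i=1..Suc n. Ham L J (s i))))
     = (\<Sum>y\<in>configs L. \<Sum>s\<in>?P. f (s(Suc n := y)) * u y *
          exp (- \<beta> * (\<Sum>i=1..Suc n. Ham L J ((s(Suc n := y)) i))))"
    using L by (simp add: sum_PiE_insert finite_configs)
  also have "\<dots> = (\<Sum>y\<in>configs L. \<Sum>s\<in>?P. (f s * exp (- \<beta> * (\<Sum>i=1..n. Ham L J (s i)))) * (u y * ?w y))"
    by (intro sum.cong refl) (simp add: f sum.atLeast1_atMost_eq algebra_simps flip: exp_add)
  also have "\<dots> = (\<Sum>s\<in>?P. f s * exp (- \<beta> * (\<Sum>i=1..n. Ham L J (s i)))) * (\<Sum>y\<in>configs L. u y * ?w y)"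
    by (simp add: sum_distrib_left sum_distrib_right sum.swap[of _ "configs L"])
  finally show ?thesis
    unfolding Omega_def[of _ _ _ "Suc n"] Omega_def[of _ _ _ n] Omega_one_replica[OF L]
    using Zpart_pos[OF L] by (simp add: field_simps)
qed

lemma Omega_Suc:
  assumes "finite L" and "\<And>s y. f (s(Suc n := y)) = f s"
  shows "Omega L J \<beta> (Suc n) f = Omega L J \<beta> n f"
  using Omega_Suc_mult[OF assms, of J \<beta> "\<lambda>_. 1"] Omega_one_replica_const[OF assms(1)] by simp

lemma Omega_first_replicas:
  assumes L: "finite L" and "m \<le> n"
    and f: "\<And>s t. (\<And>i. i \<in> {1..m} \<Longrightarrow> s i = t i) \<Longrightarrow> f s = f t"
  shows "Omega L J \<beta> n f = Omega L J \<beta> m f"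
  using \<open>m \<le> n\<close>
proof (induction n rule: dec_induct)
  case (step n)
  have "f (s(Suc n := y)) = f s" for s y
    using step.hyps by (intro f) auto
  then show ?case
    using Omega_Suc[OF L] step.IH by simp
qed simp

lemma PiE_compose_permutes:
  assumes "\<pi> permutes I" "s \<in> PiE I (\<lambda>_. B)"
  shows "s \<circ> \<pi> \<in> PiE I (\<lambda>_. B)"
  using assms by (auto simp: PiE_iff permutes_in_image permutes_not_in extensional_def)

lemma bij_betw_PiE_compose_permutes:
  assumes "\<pi> permutes I"
  shows "bij_betw (\<lambda>s. s \<circ> \<pi>) (PiE I (\<lambda>_. B)) (PiE I (\<lambda>_. B))"
proof (rule bij_betw_byWitness[where f' = "\<lambda>s. s \<circ> inv \<pi>"])
  have inv: "inv \<pi> permutes I"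
    using assms by (rule permutes_inv)
  show "\<forall>s\<in>PiE I (\<lambda>_. B). s \<circ> \<pi> \<circ> inv \<pi> = s" "\<forall>s\<in>PiE I (\<lambda>_. B). s \<circ> inv \<pi> \<circ> \<pi> = s"
    using permutes_inv_o[OF assms] by (simp_all add: o_assoc[symmetric])
  show "(\<lambda>s. s \<circ> \<pi>) ` PiE I (\<lambda>_. B) \<subseteq> PiE I (\<lambda>_. B)"
    by (intro image_subsetI PiE_compose_permutes[OF assms])
  show "(\<lambda>s. s \<circ> inv \<pi>) ` PiE I (\<lambda>_. B) \<subseteq> PiE I (\<lambda>_. B)"
    by (intro image_subsetI PiE_compose_permutes[OF inv])
qed

lemma Omega_permute_replicas:
  assumes "\<pi> permutes {1..n}"
  shows "Omega L J \<beta> n (\<lambda>s. f (s \<circ> \<pi>)) = Omega L J \<beta> n f"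
proof -
  have "(\<Sum>i=1..n. Ham L J ((s \<circ> \<pi>) i)) = (\<Sum>i=1..n. Ham L J (s i))" for s
    using sum.permute[OF assms, of "\<lambda>i. Ham L J (s i)"] by (simp add: comp_def)
  then have "(\<Sum>s\<in>PiE {1..n} (\<lambda>_. configs L). f (s \<circ> \<pi>) * exp (- \<beta> * (\<Sum>i=1..n. Ham L J (s i))))
      = (\<Sum>s\<in>PiE {1..n} (\<lambda>_. configs L). (\<lambda>s. f s * exp (- \<beta> * (\<Sum>i=1..n. Ham L J (s i)))) (s \<circ> \<pi>))"
    by simp
  also have "\<dots> = (\<Sum>s\<in>PiE {1..n} (\<lambda>_. configs L). f s * exp (- \<beta> * (\<Sum>i=1..n. Ham L J (s i))))"
    by (rule sum.reindex_bij_betw[OF bij_betw_PiE_compose_permutes[OF assms]])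
  finally show ?thesis
    unfolding Omega_def by simp
qed

lemma Omega_replica_marginal:
  assumes L: "finite L" and l: "l \<in> {1..n}"
  shows "Omega L J \<beta> n (\<lambda>s. u (s l)) = Omega L J \<beta> 1 (\<lambda>s. u (s 1))"
proof -
  have "Transposition.transpose 1 l permutes {1..n}"
    using l by (intro permutes_swap_id) auto
  then have "Omega L J \<beta> n (\<lambda>s. u (s l)) = Omega L J \<beta> n (\<lambda>s. u (s 1))"
    using Omega_permute_replicas[of "Transposition.transpose 1 l" n L J \<beta> "\<lambda>s. u (s 1)"] by simp
  also have "\<dots> = Omega L J \<beta> 1 (\<lambda>s. u (s 1))"
    using l by (intro Omega_first_replicas[OF L]) auto
  finally show ?thesis .
qed

lemma Gibbs_weight_le:
  assumes "finite L" "s \<in> PiE {1..n} (\<lambda>_. configs L)"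
  shows "exp (- \<beta> * (\<Sum>i=1..n. Ham L J (s i))) \<le> Zpart L J \<beta> ^ n"
proof -
  have "exp (- \<beta> * (\<Sum>i=1..n. Ham L J (s i))) = (\<Prod>i=1..n. exp (- \<beta> * Ham L J (s i)))"
    by (simp add: sum_distrib_left exp_sum)
  also have "\<dots> \<le> (\<Prod>i=1..n. Zpart L J \<beta>)"
  proof (rule prod_mono)
    fix i assume "i \<in> {1..n}"
    then have "s i \<in> configs L" using assms(2) by auto
    then show "0 \<le> exp (- \<beta> * Ham L J (s i)) \<and> exp (- \<beta> * Ham L J (s i)) \<le> Zpart L J \<beta>"
      unfolding Zpart_def
      using member_le_sum[of "s i" "configs L" "\<lambda>\<sigma>. exp (- \<beta> * Ham L J \<sigma>)"] finite_configs[OF assms(1)]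
      by simp
  qed
  finally show ?thesis by simp
qed

lemma Omega_bound:
  assumes "finite L"
  shows "\<bar>Omega L J \<beta> n f\<bar> \<le> (\<Sum>s\<in>PiE {1..n} (\<lambda>_. configs L). \<bar>f s\<bar>)"
proof -
  let ?Z = "Zpart L J \<beta> ^ n"
  have "\<bar>\<Sum>s\<in>PiE {1..n} (\<lambda>_. configs L). f s * exp (- \<beta> * (\<Sum>i=1..n. Ham L J (s i)))\<bar>
      \<le> (\<Sum>s\<in>PiE {1..n} (\<lambda>_. configs L). \<bar>f s\<bar> * ?Z)"
  proof (rule order_trans[OF sum_abs], rule sum_mono)
    fix s assume "s \<in> PiE {1..n} (\<lambda>_. configs L)"
    then show "\<bar>f s * exp (- \<beta> * (\<Sum>i=1..n. Ham L J (s i)))\<bar> \<le> \<bar>f s\<bar> * ?Z"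
      unfolding abs_mult abs_exp_cancel by (intro mult_left_mono Gibbs_weight_le[OF assms]) auto
  qed
  then show ?thesis
    using Zpart_pos[OF assms, of J \<beta>]
    by (simp add: Omega_def abs_divide divide_le_eq sum_distrib_right[symmetric])
qed

lemma Omega_Ham_covariance:
  assumes L: "finite L" and l: "l \<in> {1..n}" and f: "\<And>s y. f (s(Suc n := y)) = f s"
  shows "Omega L J \<beta> n (\<lambda>s. Ham L J (s l) * f s) - Omega L J \<beta> n (\<lambda>s. Ham L J (s l)) * Omega L J \<beta> n f
    = - (\<Sum>X\<in>Pow L. J X * Omega L J \<beta> (Suc n) (\<lambda>s. f s * (sigX (s l) X - sigX (s (Suc n)) X)))"
proof -
  have truncated: "Omega L J \<beta> (Suc n) (\<lambda>s. f s * (sigX (s l) X - sigX (s (Suc n)) X))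
      = Omega L J \<beta> n (\<lambda>s. sigX (s l) X * f s) - Omega L J \<beta> n (\<lambda>s. sigX (s l) X) * Omega L J \<beta> n f" for X
  proof -
    have "(\<lambda>s. sigX (s l) X * f s) (s(Suc n := y)) = sigX (s l) X * f s" for s y
      using l f by simp
    then show ?thesis
      unfolding right_diff_distrib Omega_diff Omega_Suc_mult[OF L f, of J \<beta> "\<lambda>\<sigma>. sigX \<sigma> X"]
        Omega_replica_marginal[OF L l, of _ _ "\<lambda>\<sigma>. sigX \<sigma> X"]
      by (simp add: Omega_Suc[OF L] mult.commute)
  qed
  have Ham_eq: "Ham L J \<sigma> * c = - (\<Sum>X\<in>Pow L. J X * (sigX \<sigma> X * c))" for \<sigma> c
    unfolding Ham_def by (simp add: sum_distrib_right mult.assoc)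
  have "Omega L J \<beta> n (\<lambda>s. Ham L J (s l) * g s) = - (\<Sum>X\<in>Pow L. J X * Omega L J \<beta> n (\<lambda>s. sigX (s l) X * g s))" for g
    unfolding Ham_eq using L by (simp add: Omega_minus Omega_sum Omega_cmult)
  from this[of f] this[of "\<lambda>_. 1"] show ?thesis
    unfolding truncated by (simp add: sum_distrib_left sum_distrib_right sum_subtractf algebra_simps)
qed

section \<open>Dependence on a single coupling\<close>

lemma Ham_fun_upd:
  assumes "finite L" "X \<in> Pow L"
  shows "Ham L (J(X := t)) \<sigma> = Ham L J \<sigma> + (J X - t) * sigX \<sigma> X"
proof -
  have "(\<Sum>Y\<in>Pow L - {X}. (J(X := t)) Y * sigX \<sigma> Y) = (\<Sum>Y\<in>Pow L - {X}. J Y * sigX \<sigma> Y)"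
    by (rule sum.cong) auto
  then have "(\<Sum>Y\<in>Pow L. (J(X := t)) Y * sigX \<sigma> Y) = (\<Sum>Y\<in>Pow L. J Y * sigX \<sigma> Y) + (t - J X) * sigX \<sigma> X"
    using assms by (simp add: sum.remove algebra_simps)
  then show ?thesis
    unfolding Ham_def by (simp add: algebra_simps)
qed

lemma Omega_coupling_has_derivative_covariance:
  assumes L: "finite L" and X: "X \<in> Pow L"
  shows "((\<lambda>t. Omega L (J(X := t)) \<beta> n f) has_real_derivative
     \<beta> * (Omega L (J(X := t)) \<beta> n (\<lambda>s. f s * (\<Sum>i=1..n. sigX (s i) X))
        - real n * Omega L (J(X := t)) \<beta> n f * Omega L (J(X := t)) \<beta> 1 (\<lambda>s. sigX (s 1) X))) (at t)"
proof -
  define A where "A s = (\<Sum>i=1..n. Ham L J (s i))" for s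
  define B where "B s = (\<Sum>i=1..n. sigX (s i) X)" for s
  define N where "N g t = (\<Sum>s\<in>PiE {1..n} (\<lambda>_. configs L). g s * exp (- \<beta> * (A s + (J X - t) * B s)))" for g t
  define Z where "Z t = (\<Sum>\<sigma>\<in>configs L. exp (- \<beta> * (Ham L J \<sigma> + (J X - t) * sigX \<sigma> X)))" for t
  define S where "S t = (\<Sum>\<sigma>\<in>configs L. sigX \<sigma> X * exp (- \<beta> * (Ham L J \<sigma> + (J X - t) * sigX \<sigma> X)))" for t
  have Omega_eq: "Omega L (J(X := t)) \<beta> n g = N g t / Z t ^ n" for g t
    unfolding Omega_def N_def Z_def Zpart_def A_def B_def Ham_fun_upd[OF L X]
    by (simp add: sum.distrib sum_distrib_left)
  have Omega_one_eq: "Omega L (J(X := t)) \<beta> 1 (\<lambda>s. sigX (s 1) X) = S t / Z t" for t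
    unfolding Omega_one_replica[OF L, of _ _ "\<lambda>\<sigma>. sigX \<sigma> X"] S_def Z_def Zpart_def Ham_fun_upd[OF L X] ..
  have Z_pos: "0 < Z t" for t
    using Zpart_pos[OF L, of "J(X := t)" \<beta>] unfolding Z_def Zpart_def Ham_fun_upd[OF L X] .
  have N_deriv: "((\<lambda>t. N g t) has_real_derivative \<beta> * N (\<lambda>s. g s * B s) t) (at t)" for g t
    unfolding N_def sum_distrib_left
    by (intro DERIV_sum) (auto intro!: derivative_eq_intros simp: algebra_simps)
  have Z_deriv: "(Z has_real_derivative \<beta> * S t) (at t)" for t
    unfolding Z_def[abs_def] S_def sum_distrib_left
    by (intro DERIV_sum) (auto intro!: derivative_eq_intros simp: algebra_simps)
  have "((\<lambda>t. N f t / Z t ^ n) has_real_derivative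
      (\<beta> * N (\<lambda>s. f s * B s) t * Z t ^ n - N f t * (real n * (\<beta> * S t * Z t ^ (n - 1)))) / (Z t ^ n * Z t ^ n)) (at t)"
    using Z_pos[of t] DERIV_power[OF Z_deriv[of t], of n] by (intro DERIV_divide N_deriv) auto
  moreover have "(\<beta> * N (\<lambda>s. f s * B s) t * Z t ^ n - N f t * (real n * (\<beta> * S t * Z t ^ (n - 1)))) / (Z t ^ n * Z t ^ n)
     = \<beta> * (N (\<lambda>s. f s * B s) t / Z t ^ n - real n * (N f t / Z t ^ n) * (S t / Z t))"
    using Z_pos[of t] by (cases n) (simp_all add: field_simps)
  ultimately show ?thesis
    unfolding Omega_eq Omega_one_eq B_def[symmetric] by simp
qed

(* The centring term n * <sigma_X> of the derivative is carried by the extra replica n+1. *)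
definition coupling_deriv :: "nat \<Rightarrow> 'p set \<Rightarrow> ((nat \<Rightarrow> 'p \<Rightarrow> real) \<Rightarrow> real) \<Rightarrow> (nat \<Rightarrow> 'p \<Rightarrow> real) \<Rightarrow> real" where
  "coupling_deriv n X f s = f s * ((\<Sum>i=1..n. sigX (s i) X) - real n * sigX (s (Suc n)) X)"

lemma Omega_coupling_has_derivative:
  assumes L: "finite L" and X: "X \<in> Pow L" and f: "\<And>s y. f (s(Suc n := y)) = f s"
  shows "((\<lambda>t. Omega L (J(X := t)) \<beta> n f) has_real_derivative
     \<beta> * Omega L (J(X := t)) \<beta> (Suc n) (coupling_deriv n X f)) (at t)"
proof -
  have fB: "(\<lambda>s. f s * (\<Sum>i=1..n. sigX (s i) X)) (s(Suc n := y)) = f s * (\<Sum>i=1..n. sigX (s i) X)" for s y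
    by (simp add: f)
  have "Omega L K \<beta> (Suc n) (coupling_deriv n X f)
      = Omega L K \<beta> n (\<lambda>s. f s * (\<Sum>i=1..n. sigX (s i) X)) - real n * Omega L K \<beta> n f * Omega L K \<beta> 1 (\<lambda>s. sigX (s 1) X)"
    for K
    unfolding coupling_deriv_def right_diff_distrib mult.left_commute[of _ "real n"]
    unfolding Omega_diff Omega_cmult Omega_Suc[OF L fB] Omega_Suc_mult[OF L f, of K \<beta> "\<lambda>\<sigma>. sigX \<sigma> X"]
    by (simp add: mult.assoc)
  then show ?thesis
    using Omega_coupling_has_derivative_covariance[OF L X] by simp
qed

section \<open>Gaussian integration by parts\<close>

abbreviation std_normal :: "real measure" where
  "std_normal \<equiv> density lborel std_normal_density"

lemma prob_space_std_normal: "prob_space std_normal"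
  by (rule prob_space_normal_density) simp

lemma integrable_std_normal_moment_bounded:
  fixes f :: "real \<Rightarrow> real"
  assumes f: "f \<in> borel_measurable borel" "\<And>x. \<bar>f x\<bar> \<le> B"
  shows "integrable lborel (\<lambda>x. std_normal_density x * (x ^ k * f x))"
proof (rule Bochner_Integration.integrable_bound)
  show "integrable lborel (\<lambda>x. B * (std_normal_density x * \<bar>x\<bar> ^ k))"
    using integrable_std_normal_moment_abs[of k] by simp
  have "std_normal_density x * \<bar>x\<bar> ^ k * \<bar>f x\<bar> \<le> \<bar>B\<bar> * (std_normal_density x * \<bar>x\<bar> ^ k)" for x
  proof -
    have "\<bar>f x\<bar> \<le> \<bar>B\<bar>"
      using f(2)[of x] by (meson abs_ge_self order_trans)
    then have "\<bar>f x\<bar> * (std_normal_density x * \<bar>x\<bar> ^ k) \<le> \<bar>B\<bar> * (std_normal_density x * \<bar>x\<bar> ^ k)"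
      by (rule mult_right_mono) simp
    then show ?thesis
      by (simp add: mult_ac)
  qed
  then show "AE x in lborel. norm (std_normal_density x * (x ^ k * f x)) \<le> norm (B * (std_normal_density x * \<bar>x\<bar> ^ k))"
    by (simp add: abs_mult power_abs mult.assoc)
qed (use f(1) in measurable)

lemma std_normal_density_has_derivative:
  "(std_normal_density has_real_derivative - x * std_normal_density x) (at x)"
  unfolding std_normal_density_def
  by (auto intro!: derivative_eq_intros simp: field_simps power2_eq_square)

lemma std_normal_integration_by_parts:
  fixes f f' :: "real \<Rightarrow> real"
  assumes f': "\<And>x. (f has_real_derivative f' x) (at x)" "\<And>x. isCont f' x"
    and bounded: "\<And>x. \<bar>f x\<bar> \<le> B" "\<And>x. \<bar>f' x\<bar> \<le> B'"
  shows "(\<integral>x. x * f x \<partial>std_normal) = (\<integral>x. f' x \<partial>std_normal)"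
proof -
  have [measurable]: "f \<in> borel_measurable borel" "f' \<in> borel_measurable borel"
    using f'(2) DERIV_isCont[OF f'(1)]
    by (auto intro!: borel_measurable_continuous_onI continuous_at_imp_continuous_on)
  let ?g = "\<lambda>x. std_normal_density x * (x * f x) - std_normal_density x * f' x"
  let ?F = "\<lambda>x. - (std_normal_density x * f x)"
  have int: "integrable lborel (\<lambda>x. std_normal_density x * (x * f x))"
      "integrable lborel (\<lambda>x. std_normal_density x * f' x)"
    using integrable_std_normal_moment_bounded[of f B 1] integrable_std_normal_moment_bounded[of f' B' 0] bounded
    by simp_all
  have F_lim: "(?F \<longlongrightarrow> 0) F" if "F = at_top \<or> F = at_bot" for F
  proof -
    have "(std_normal_density \<longlongrightarrow> 0) F"
      using that unfolding std_normal_density_def by (elim disjE) (simp_all, real_asymp+)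
    then have "((\<lambda>x. std_normal_density x * f x) \<longlongrightarrow> 0) F"
      by (rule Lim_null_comparison[rotated, OF tendsto_mult_left_zero[of _ _ B]])
        (simp add: abs_mult mult_left_mono bounded)
    then show ?thesis
      using tendsto_minus by fastforce
  qed
  have "(LBINT x=-\<infinity>..\<infinity>. ?g x) = 0 - 0"
  proof (rule interval_integral_FTC_integrable)
    show "(?F has_vector_derivative ?g x) (at x)" for x
      unfolding has_real_derivative_iff_has_vector_derivative[symmetric]
      by (rule derivative_eq_intros std_normal_density_has_derivative f' refl)+ (simp add: algebra_simps)
    show "isCont ?g x" for x
      using f'(2) DERIV_isCont[OF std_normal_density_has_derivative] DERIV_isCont[OF f'(1)]
      by (intro continuous_intros) auto
    show "set_integrable lborel (einterval (- \<infinity>) \<infinity>) ?g"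
      unfolding set_integrable_def using int by simp
    show "((?F \<circ> real_of_ereal) \<longlongrightarrow> 0) (at_right (- \<infinity>))" "((?F \<circ> real_of_ereal) \<longlongrightarrow> 0) (at_left \<infinity>)"
      unfolding ereal_tendsto_simps1 using F_lim by blast+
  qed simp
  then have "(\<integral>x. std_normal_density x * (x * f x) \<partial>lborel) = (\<integral>x. std_normal_density x * f' x \<partial>lborel)"
    using int by (simp add: interval_lebesgue_integral_def set_lebesgue_integral_def)
  then show ?thesis
    by (simp add: integral_density)
qed

lemma integrable_product_std_normal_bounded:
  fixes F :: "('i \<Rightarrow> real) \<Rightarrow> real"
  assumes "F \<in> borel_measurable (PiM I (\<lambda>_. std_normal))" "\<And>x. \<bar>F x\<bar> \<le> B"
  shows "integrable (PiM I (\<lambda>_. std_normal)) F"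
proof -
  interpret prob_space "PiM I (\<lambda>_. std_normal)"
    by (intro prob_space_PiM prob_space_std_normal)
  show ?thesis
    by (rule integrable_const_bound[where B = B]) (simp_all add: assms)
qed

lemma integrable_product_std_normal_component_mult:
  fixes F :: "('i \<Rightarrow> real) \<Rightarrow> real"
  assumes i: "i \<in> I" and F: "F \<in> borel_measurable (PiM I (\<lambda>_. std_normal))" "\<And>x. \<bar>F x\<bar> \<le> B"
  shows "integrable (PiM I (\<lambda>_. std_normal)) (\<lambda>x. x i * F x)"
proof (rule Bochner_Integration.integrable_bound)
  have "integrable std_normal (\<lambda>x. x)"
    using integrable_std_normal_moment[of 1] by (simp add: integrable_density)
  then have distr: "integrable (distr (PiM I (\<lambda>_. std_normal)) std_normal (\<lambda>x. x i)) (\<lambda>x. x)"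
    using distr_PiM_component[OF prob_space_std_normal i] by simp
  have "(\<lambda>x. x) \<in> borel_measurable std_normal"
    by (rule measurable_ident_sets) simp
  from integrable_distr_eq[OF measurable_component_singleton[OF i] this] distr
  have "integrable (PiM I (\<lambda>_. std_normal)) (\<lambda>x. x i)"
    by simp
  then show "integrable (PiM I (\<lambda>_. std_normal)) (\<lambda>x. B * x i)"
    by (rule integrable_mult_right)
  have "\<bar>x i * F x\<bar> \<le> \<bar>B * x i\<bar>" for x
  proof -
    have "\<bar>F x\<bar> \<le> \<bar>B\<bar>"
      using F(2)[of x] by (meson abs_ge_self order_trans)
    then show ?thesis
      unfolding abs_mult by (subst mult.commute) (simp add: mult_right_mono)
  qed
  then show "AE x in PiM I (\<lambda>_. std_normal). norm (x i * F x) \<le> norm (B * x i)"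
    by simp
qed (use i F(1) in measurable)

lemma product_std_normal_integration_by_parts:
  fixes \<Phi> \<Psi> :: "('i \<Rightarrow> real) \<Rightarrow> real"
  assumes I: "finite I" "i \<in> I"
    and measurable: "\<Phi> \<in> borel_measurable (PiM I (\<lambda>_. std_normal))" "\<Psi> \<in> borel_measurable (PiM I (\<lambda>_. std_normal))"
    and bounded: "\<And>x. \<bar>\<Phi> x\<bar> \<le> B" "\<And>x. \<bar>\<Psi> x\<bar> \<le> B'"
    and deriv: "\<And>x y. ((\<lambda>y. \<Phi> (x(i := y))) has_real_derivative \<Psi> (x(i := y))) (at y)"
    and cont: "\<And>x y. isCont (\<lambda>y. \<Psi> (x(i := y))) y"
  shows "(\<integral>x. x i * \<Phi> x \<partial>PiM I (\<lambda>_. std_normal)) = (\<integral>x. \<Psi> x \<partial>PiM I (\<lambda>_. std_normal))"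
proof -
  interpret product_sigma_finite "\<lambda>_. std_normal"
    by (simp add: product_sigma_finite_def prob_space_imp_sigma_finite prob_space_std_normal)
  have I_eq: "insert i (I - {i}) = I" and I_rest: "finite (I - {i})" "i \<notin> I - {i}"
    using I by auto
  have "(\<integral>x. x i * \<Phi> x \<partial>PiM I (\<lambda>_. std_normal))
      = (\<integral>x. (\<integral>y. y * \<Phi> (x(i := y)) \<partial>std_normal) \<partial>PiM (I - {i}) (\<lambda>_. std_normal))"
    using product_integral_insert[OF I_rest, of "\<lambda>x. x i * \<Phi> x"]
      integrable_product_std_normal_component_mult[OF I(2) measurable(1) bounded(1)]
    unfolding I_eq by simp
  also have "\<dots> = (\<integral>x. (\<integral>y. \<Psi> (x(i := y)) \<partial>std_normal) \<partial>PiM (I - {i}) (\<lambda>_. std_normal))"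
    using std_normal_integration_by_parts[OF deriv cont bounded] by simp
  also have "\<dots> = (\<integral>x. \<Psi> x \<partial>PiM I (\<lambda>_. std_normal))"
    using product_integral_insert[OF I_rest, of \<Psi>]
      integrable_product_std_normal_bounded[OF measurable(2) bounded(2)]
    unfolding I_eq by simp
  finally show ?thesis .
qed

section \<open>Disorder averages\<close>

lemma Ham_disorder_measurable[measurable]:
  "finite L \<Longrightarrow> (\<lambda>g. Ham L (\<lambda>Y. \<Delta> Y * g Y) \<sigma>) \<in> borel_measurable (PiM (Pow L) (\<lambda>_. std_normal))"
  unfolding Ham_def by measurable

lemma Omega_disorder_measurable[measurable]:
  "finite L \<Longrightarrow> (\<lambda>g. Omega L (\<lambda>Y. \<Delta> Y * g Y) \<beta> n f) \<in> borel_measurable (PiM (Pow L) (\<lambda>_. std_normal))"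
  unfolding Omega_def Zpart_def by measurable

lemma Omega_disorder_integrable:
  "finite L \<Longrightarrow> integrable (PiM (Pow L) (\<lambda>_. std_normal)) (\<lambda>g. Omega L (\<lambda>Y. \<Delta> Y * g Y) \<beta> n f)"
  by (rule integrable_product_std_normal_bounded[OF Omega_disorder_measurable Omega_bound])

lemma coupling_Omega_disorder_integrable:
  assumes "finite L" "X \<in> Pow L"
  shows "integrable (PiM (Pow L) (\<lambda>_. std_normal)) (\<lambda>g. \<Delta> X * g X * Omega L (\<lambda>Y. \<Delta> Y * g Y) \<beta> n f)"
  using integrable_product_std_normal_component_mult[OF assms(2) Omega_disorder_measurable Omega_bound, OF assms(1) assms(1)]
  by (simp add: mult.assoc)

lemma Av_cmult: "Av L \<Delta> (\<lambda>J. c * F J) = c * Av L \<Delta> F"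
  unfolding Av_def by simp

lemma Av_minus: "Av L \<Delta> (\<lambda>J. - F J) = - Av L \<Delta> F"
  unfolding Av_def by simp

lemma Av_sum:
  assumes "finite A" "\<And>a. a \<in> A \<Longrightarrow> integrable (PiM (Pow L) (\<lambda>_. std_normal)) (\<lambda>g. F a (\<lambda>Y. \<Delta> Y * g Y))"
  shows "Av L \<Delta> (\<lambda>J. \<Sum>a\<in>A. F a J) = (\<Sum>a\<in>A. Av L \<Delta> (F a))"
  unfolding Av_def using assms by (simp add: integral_sum)

lemma Av_coupling_mult:
  assumes L: "finite L" and X: "X \<in> Pow L" and f: "\<And>s y. f (s(Suc n := y)) = f s"
  shows "Av L \<Delta> (\<lambda>J. J X * Omega L J \<beta> n f)
    = \<beta> * (\<Delta> X)\<^sup>2 * Av L \<Delta> (\<lambda>J. Omega L J \<beta> (Suc n) (coupling_deriv n X f))"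
proof -
  let ?J = "\<lambda>g Y. \<Delta> Y * g Y"
  let ?\<Psi> = "\<lambda>g. \<beta> * \<Delta> X * Omega L (?J g) \<beta> (Suc n) (coupling_deriv n X f)"
  have J_upd: "?J (g(X := y)) = (?J g)(X := \<Delta> X * y)" for g y
    by auto
  have deriv: "((\<lambda>y. Omega L (?J (g(X := y))) \<beta> n f) has_real_derivative ?\<Psi> (g(X := y))) (at y)" for g y
    unfolding J_upd
    using DERIV_chain2[OF Omega_coupling_has_derivative[OF L X f] DERIV_cmult_Id[of "\<Delta> X"]]
    by (simp add: mult_ac)
  have "Av L \<Delta> (\<lambda>J. J X * Omega L J \<beta> n f)
      = \<Delta> X * (\<integral>g. g X * Omega L (?J g) \<beta> n f \<partial>PiM (Pow L) (\<lambda>_. std_normal))"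
    unfolding Av_def by (simp add: mult.assoc)
  also have "\<dots> = \<Delta> X * (\<integral>g. ?\<Psi> g \<partial>PiM (Pow L) (\<lambda>_. std_normal))"
  proof (intro arg_cong[where f = "(*) (\<Delta> X)"] product_std_normal_integration_by_parts)
    show "\<bar>Omega L (?J g) \<beta> n f\<bar> \<le> (\<Sum>s\<in>PiE {1..n} (\<lambda>_. configs L). \<bar>f s\<bar>)" for g
      by (rule Omega_bound[OF L])
    show "\<bar>?\<Psi> g\<bar> \<le> \<bar>\<beta> * \<Delta> X\<bar> * (\<Sum>s\<in>PiE {1..Suc n} (\<lambda>_. configs L). \<bar>coupling_deriv n X f s\<bar>)" for g
      unfolding abs_mult[of "\<beta> * \<Delta> X"] by (intro mult_left_mono Omega_bound[OF L]) auto
    show "((\<lambda>y. Omega L (?J (g(X := y))) \<beta> n f) has_real_derivative ?\<Psi> (g(X := y))) (at y)" for g y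
      by (rule deriv)
    show "isCont (\<lambda>y. ?\<Psi> (g(X := y))) y" for g y
    proof -
      have "isCont (\<lambda>t. Omega L ((?J g)(X := t)) \<beta> (Suc n) (coupling_deriv n X f)) (\<Delta> X * y)"
        by (rule DERIV_isCont[OF Omega_coupling_has_derivative_covariance[OF L X]])
      then have "isCont (\<lambda>y. Omega L ((?J g)(X := \<Delta> X * y)) \<beta> (Suc n) (coupling_deriv n X f)) y"
        by (rule isCont_o2[rotated]) (intro continuous_intros)
      then show ?thesis
        unfolding J_upd by (intro continuous_intros)
    qed
    show "finite (Pow L)" "X \<in> Pow L"
      using L X by auto
    show "(\<lambda>g. Omega L (?J g) \<beta> n f) \<in> borel_measurable (PiM (Pow L) (\<lambda>_. std_normal))"
      by (rule Omega_disorder_measurable[OF L])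
    show "?\<Psi> \<in> borel_measurable (PiM (Pow L) (\<lambda>_. std_normal))"
      using Omega_disorder_measurable[OF L] by (intro borel_measurable_times borel_measurable_const)
  qed
  also have "\<dots> = \<beta> * (\<Delta> X)\<^sup>2 * Av L \<Delta> (\<lambda>J. Omega L J \<beta> (Suc n) (coupling_deriv n X f))"
    unfolding Av_def by (simp add: power2_eq_square)
  finally show ?thesis .
qed

lemma Av_Ham_covariance:
  assumes L: "finite L" and l: "l \<in> {1..n}"
    and f: "\<And>s t. (\<And>i. i \<in> {1..n} \<Longrightarrow> s i = t i) \<Longrightarrow> f s = f t"
  shows "Av L \<Delta> (\<lambda>J. Omega L J \<beta> n (\<lambda>s. Ham L J (s l) * f s)
      - Omega L J \<beta> n (\<lambda>s. Ham L J (s l)) * Omega L J \<beta> n f)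
    = - \<beta> * Av L \<Delta> (\<lambda>J. Omega L J \<beta> (Suc (Suc n)) (\<lambda>s. \<Sum>X\<in>Pow L.
        (\<Delta> X)\<^sup>2 * coupling_deriv (Suc n) X (\<lambda>s. f s * (sigX (s l) X - sigX (s (Suc n)) X)) s))"
proof -
  define F where "F X s = f s * (sigX (s l) X - sigX (s (Suc n)) X)" for X s
  have f_Suc: "f (s(Suc n := y)) = f s" "f (s(Suc (Suc n) := y)) = f s" for s y
    by (rule f; auto)+
  have F_Suc: "F X (s(Suc (Suc n) := y)) = F X s" for X s y
    using l by (simp add: F_def f_Suc(2))
  have "Av L \<Delta> (\<lambda>J. Omega L J \<beta> n (\<lambda>s. Ham L J (s l) * f s)
      - Omega L J \<beta> n (\<lambda>s. Ham L J (s l)) * Omega L J \<beta> n f)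
    = - (\<Sum>X\<in>Pow L. Av L \<Delta> (\<lambda>J. J X * Omega L J \<beta> (Suc n) (F X)))"
    unfolding Omega_Ham_covariance[OF L l f_Suc(1)] Av_minus F_def
    using L by (subst Av_sum) (auto simp: coupling_Omega_disorder_integrable)
  also have "\<dots> = - (\<Sum>X\<in>Pow L. \<beta> * (\<Delta> X)\<^sup>2 * Av L \<Delta> (\<lambda>J. Omega L J \<beta> (Suc (Suc n)) (coupling_deriv (Suc n) X (F X))))"
  proof -
    have "Av L \<Delta> (\<lambda>J. J X * Omega L J \<beta> (Suc n) (F X))
      = \<beta> * (\<Delta> X)\<^sup>2 * Av L \<Delta> (\<lambda>J. Omega L J \<beta> (Suc (Suc n)) (coupling_deriv (Suc n) X (F X)))"
      if "X \<in> Pow L" for X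
      by (rule Av_coupling_mult[OF L that F_Suc[of X]])
    then show ?thesis
      by simp
  qed
  also have "\<dots> = - \<beta> * Av L \<Delta> (\<lambda>J. Omega L J \<beta> (Suc (Suc n)) (\<lambda>s. \<Sum>X\<in>Pow L. (\<Delta> X)\<^sup>2 * coupling_deriv (Suc n) X (F X) s))"
    using L by (simp add: Omega_sum Omega_cmult Av_sum Av_cmult Omega_disorder_integrable sum_distrib_left
        sum_negf mult.assoc)
  finally show ?thesis
    unfolding F_def[abs_def] .
qed

section \<open>Overlaps\<close>

lemma cov_diff_eq_sum:
  "cov L \<Delta> \<sigma> \<rho> - cov L \<Delta> \<tau> \<rho> = (\<Sum>X\<in>Pow L. (\<Delta> X)\<^sup>2 / real (card L) * (sigX \<sigma> X - sigX \<tau> X) * sigX \<rho> X)"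
  unfolding cov_def by (simp add: sum_distrib_left sum_subtractf algebra_simps diff_divide_distrib)

lemma sum_coupling_deriv_eq_cov:
  "(\<Sum>X\<in>Pow L. (\<Delta> X)\<^sup>2 / real (card L) * coupling_deriv n X (\<lambda>s. \<phi> s * (sigX (s a) X - sigX (s b) X)) s)
    = \<phi> s * ((\<Sum>i=1..n. cov L \<Delta> (s a) (s i) - cov L \<Delta> (s b) (s i))
        - real n * (cov L \<Delta> (s a) (s (Suc n)) - cov L \<Delta> (s b) (s (Suc n))))"
proof -
  let ?w = "\<lambda>X. (\<Delta> X)\<^sup>2 / real (card L) * (sigX (s a) X - sigX (s b) X)"
  have "(\<Sum>X\<in>Pow L. (\<Delta> X)\<^sup>2 / real (card L) * coupling_deriv n X (\<lambda>s. \<phi> s * (sigX (s a) X - sigX (s b) X)) s)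
      = \<phi> s * ((\<Sum>X\<in>Pow L. \<Sum>i=1..n. ?w X * sigX (s i) X) - real n * (\<Sum>X\<in>Pow L. ?w X * sigX (s (Suc n)) X))"
    unfolding coupling_deriv_def
    by (simp add: sum_distrib_left sum_subtractf right_diff_distrib mult_ac diff_divide_distrib)
  then show ?thesis
    unfolding cov_diff_eq_sum sum.swap[of _ "Pow L"] .
qed

lemma cov_sym: "cov L \<Delta> \<sigma> \<tau> = cov L \<Delta> \<tau> \<sigma>"
  unfolding cov_def by (simp add: mult_ac)

lemma sigX_sq:
  assumes "\<sigma> \<in> configs L" "X \<in> Pow L"
  shows "sigX \<sigma> X * sigX \<sigma> X = (if X = {} then 0 else 1)"
proof -
  have "\<sigma> i * \<sigma> i = 1" if "i \<in> X" for i
    using assms that by (fastforce simp: configs_def PiE_iff)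
  then show ?thesis
    by (simp add: sigX_def prod.distrib[symmetric])
qed

lemma cov_self_eq:
  assumes "\<sigma> \<in> configs L" "\<tau> \<in> configs L"
  shows "cov L \<Delta> \<sigma> \<sigma> = cov L \<Delta> \<tau> \<tau>"
proof -
  have "(\<Delta> X)\<^sup>2 * sigX \<sigma> X * sigX \<sigma> X = (\<Delta> X)\<^sup>2 * sigX \<tau> X * sigX \<tau> X" if "X \<in> Pow L" for X
    using sigX_sq[OF assms(1) that] sigX_sq[OF assms(2) that] by (simp add: mult.assoc)
  then have "(\<Sum>X\<in>Pow L. (\<Delta> X)\<^sup>2 * sigX \<sigma> X * sigX \<sigma> X) = (\<Sum>X\<in>Pow L. (\<Delta> X)\<^sup>2 * sigX \<tau> X * sigX \<tau> X)"
    by (rule sum.cong[OF refl])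
  then show ?thesis
    unfolding cov_def by simp
qed

definition Omega_Gq :: "'p set \<Rightarrow> ('p set \<Rightarrow> real) \<Rightarrow> real \<Rightarrow> nat \<Rightarrow> ('r \<Rightarrow> nat)
    \<Rightarrow> (real^'r^'r \<Rightarrow> real) \<Rightarrow> nat \<Rightarrow> nat \<Rightarrow> ('p set \<Rightarrow> real) \<Rightarrow> real" where
  "Omega_Gq L \<Delta> \<beta> n \<iota> G a b J = Omega L J \<beta> n (\<lambda>s. obs L \<Delta> \<iota> G s * cov L \<Delta> (s a) (s b))"

lemma Omega_Gq_sym: "Omega_Gq L \<Delta> \<beta> n \<iota> G a b = Omega_Gq L \<Delta> \<beta> n \<iota> G b a"
  unfolding Omega_Gq_def by (simp only: cov_sym[of L \<Delta> "s a" "s b" for s])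

lemma Omega_Gq_self:
  assumes "a \<in> {1..n}" "b \<in> {1..n}"
  shows "Omega_Gq L \<Delta> \<beta> n \<iota> G a a = Omega_Gq L \<Delta> \<beta> n \<iota> G b b"
  unfolding Omega_Gq_def
proof (rule ext, rule Omega_cong)
  fix s assume "s \<in> PiE {1..n} (\<lambda>_. configs L)"
  then have "s a \<in> configs L" "s b \<in> configs L"
    using assms by auto
  then show "obs L \<Delta> \<iota> G s * cov L \<Delta> (s a) (s a) = obs L \<Delta> \<iota> G s * cov L \<Delta> (s b) (s b)"
    by (simp only: cov_self_eq[of "s a" L "s b" \<Delta>])
qed

context
  fixes L :: "'p set" and \<Delta> :: "'p set \<Rightarrow> real" and \<beta> :: real and R :: nat
    and \<iota> :: "'r::finite \<Rightarrow> nat" and G :: "real^'r^'r \<Rightarrow> real"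
  assumes L: "finite L" and iota: "\<And>a. \<iota> a \<in> {1..R}"
begin

lemma obs_first_replicas: "(\<And>i. i \<in> {1..R} \<Longrightarrow> s i = t i) \<Longrightarrow> obs L \<Delta> \<iota> G s = obs L \<Delta> \<iota> G t"
  unfolding obs_def using iota by simp

lemma bracket_eq_Av_Omega_Gq:
  assumes "a \<in> {1..R+2}" "b \<in> {1..R+2}"
  shows "bracket L \<Delta> \<beta> R \<iota> G a b = Av L \<Delta> (Omega_Gq L \<Delta> \<beta> (R+2) \<iota> G a b)"
proof -
  have "Omega L J \<beta> (R+2) (\<lambda>s. obs L \<Delta> \<iota> G s * cov L \<Delta> (s a) (s b))
      = Omega L J \<beta> (max R (max a b)) (\<lambda>s. obs L \<Delta> \<iota> G s * cov L \<Delta> (s a) (s b))" for J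
  proof (rule Omega_first_replicas[OF L])
    fix s t :: "nat \<Rightarrow> 'p \<Rightarrow> real"
    assume "\<And>i. i \<in> {1..max R (max a b)} \<Longrightarrow> s i = t i"
    moreover from this have "obs L \<Delta> \<iota> G s = obs L \<Delta> \<iota> G t"
      by (intro obs_first_replicas) auto
    ultimately show "obs L \<Delta> \<iota> G s * cov L \<Delta> (s a) (s b) = obs L \<Delta> \<iota> G t * cov L \<Delta> (t a) (t b)"
      using assms by auto
  qed (use assms in auto)
  then show ?thesis
    unfolding bracket_def Omega_Gq_def by simp
qed

lemma Omega_Gq_swap_last:
  assumes "a \<in> {1..R}"
  shows "Omega_Gq L \<Delta> \<beta> (R+2) \<iota> G a (R+2) = Omega_Gq L \<Delta> \<beta> (R+2) \<iota> G a (R+1)"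
proof -
  let ?\<pi> = "Transposition.transpose (R+1) (R+2)"
  have \<pi>: "?\<pi> permutes {1..R+2}"
    by (intro permutes_swap_id) auto
  have "obs L \<Delta> \<iota> G (s \<circ> ?\<pi>) * cov L \<Delta> ((s \<circ> ?\<pi>) a) ((s \<circ> ?\<pi>) (R+2))
      = obs L \<Delta> \<iota> G s * cov L \<Delta> (s a) (s (R+1))" for s
  proof -
    have "obs L \<Delta> \<iota> G (s \<circ> ?\<pi>) = obs L \<Delta> \<iota> G s"
      by (rule obs_first_replicas) (auto simp: transpose_def)
    then show ?thesis
      using assms by (simp add: transpose_def)
  qed
  then show ?thesis
    unfolding Omega_Gq_def
    using Omega_permute_replicas[OF \<pi>, of L _ \<beta> "\<lambda>s. obs L \<Delta> \<iota> G s * cov L \<Delta> (s a) (s (R+2))"] by simp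
qed

abbreviation Av_Gq :: "nat \<Rightarrow> nat \<Rightarrow> real" where
  "Av_Gq a b \<equiv> Av L \<Delta> (Omega_Gq L \<Delta> \<beta> (R+2) \<iota> G a b)"

lemma Av_energy_obs_covariance:
  assumes l: "l \<in> {1..R}"
  shows "Av L \<Delta> (\<lambda>J. Omega L J \<beta> R (\<lambda>s. Ham L J (s l) / real (card L) * obs L \<Delta> \<iota> G s)
      - Omega L J \<beta> R (\<lambda>s. Ham L J (s l) / real (card L)) * Omega L J \<beta> R (obs L \<Delta> \<iota> G))
    = - \<beta> * ((\<Sum>i=1..R+1. Av_Gq l i - Av_Gq (R+1) i) - real (R+1) * (Av_Gq l (R+2) - Av_Gq (R+1) (R+2)))"
proof -
  let ?c = "real (card L)"
  let ?ob = "obs L \<Delta> \<iota> G"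
  have "Av L \<Delta> (\<lambda>J. Omega L J \<beta> R (\<lambda>s. Ham L J (s l) / ?c * ?ob s)
      - Omega L J \<beta> R (\<lambda>s. Ham L J (s l) / ?c) * Omega L J \<beta> R ?ob)
    = 1 / ?c * Av L \<Delta> (\<lambda>J. Omega L J \<beta> R (\<lambda>s. Ham L J (s l) * ?ob s)
      - Omega L J \<beta> R (\<lambda>s. Ham L J (s l)) * Omega L J \<beta> R ?ob)"
    using Omega_cmult[of L _ \<beta> R "1 / ?c"] Av_cmult[of L \<Delta> "1 / ?c"]
    by (simp flip: diff_divide_distrib)
  also have "\<dots> = 1 / ?c * (- \<beta> * Av L \<Delta> (\<lambda>J. Omega L J \<beta> (Suc (Suc R)) (\<lambda>s. \<Sum>X\<in>Pow L.
        (\<Delta> X)\<^sup>2 * coupling_deriv (Suc R) X (\<lambda>s. ?ob s * (sigX (s l) X - sigX (s (Suc R)) X)) s)))"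
    by (simp only: Av_Ham_covariance[OF L l obs_first_replicas])
  also have "\<dots> = - \<beta> * Av L \<Delta> (\<lambda>J. Omega L J \<beta> (R+2) (\<lambda>s. \<Sum>X\<in>Pow L.
        (\<Delta> X)\<^sup>2 / ?c * coupling_deriv (R+1) X (\<lambda>s. ?ob s * (sigX (s l) X - sigX (s (R+1)) X)) s))"
    using Omega_cmult[of L _ \<beta> "Suc (Suc R)" "1 / ?c"] Av_cmult[of L \<Delta> "1 / ?c"]
    by (simp flip: sum_divide_distrib)
  also have "\<dots> = - \<beta> * Av L \<Delta> (\<lambda>J. (\<Sum>i=1..R+1. Omega_Gq L \<Delta> \<beta> (R+2) \<iota> G l i J - Omega_Gq L \<Delta> \<beta> (R+2) \<iota> G (R+1) i J)
      - real (R+1) * (Omega_Gq L \<Delta> \<beta> (R+2) \<iota> G l (R+2) J - Omega_Gq L \<Delta> \<beta> (R+2) \<iota> G (R+1) (R+2) J))"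
    unfolding sum_coupling_deriv_eq_cov Omega_Gq_def Suc_eq_plus1 add.assoc one_add_one
    by (simp only: right_diff_distrib sum_distrib_left sum_subtractf mult.left_commute[of "obs L \<Delta> \<iota> G _"]
        Omega_diff Omega_sum[OF finite_atLeastAtMost] Omega_cmult)
  also have "\<dots> = - \<beta> * ((\<Sum>i=1..R+1. Av_Gq l i - Av_Gq (R+1) i) - real (R+1) * (Av_Gq l (R+2) - Av_Gq (R+1) (R+2)))"
    unfolding Av_def using L by (simp add: Omega_Gq_def Omega_disorder_integrable)
  finally show ?thesis .
qed

lemma Av_Gq_replica_reduction:
  assumes l: "l \<in> {1..R}"
  shows "(\<Sum>i=1..R+1. Av_Gq l i - Av_Gq (R+1) i) - real (R+1) * (Av_Gq l (R+2) - Av_Gq (R+1) (R+2))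
    = (\<Sum>i\<in>{1..R}-{l}. Av_Gq i l) - (\<Sum>i=1..R. Av_Gq i (R+1)) - real R * Av_Gq l (R+1)
      + real (R+1) * Av_Gq (R+1) (R+2)"
proof -
  have sym: "Av_Gq a b = Av_Gq b a" for a b
    by (simp only: Omega_Gq_sym[of L \<Delta> \<beta> "R+2" \<iota> G a b])
  have "Omega_Gq L \<Delta> \<beta> (R+2) \<iota> G (R+1) (R+1) = Omega_Gq L \<Delta> \<beta> (R+2) \<iota> G l l"
    using l by (intro Omega_Gq_self) auto
  then have self: "Av_Gq (R+1) (R+1) = Av_Gq l l"
    \<comment> \<open>the self-overlap is the same for every configuration, so the diagonal terms cancel\<close>
    by simp
  have swap: "Av_Gq l (R+2) = Av_Gq l (R+1)"
    using l by (simp only: Omega_Gq_swap_last)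
  have "(\<Sum>i\<in>{1..R}-{l}. Av_Gq l i) = (\<Sum>i\<in>{1..R}-{l}. Av_Gq i l)"
       "(\<Sum>i=1..R. Av_Gq (R+1) i) = (\<Sum>i=1..R. Av_Gq i (R+1))"
    by (rule sum.cong[OF refl], rule sym)+
  moreover have "(\<Sum>i=1..R+1. Av_Gq l i - Av_Gq (R+1) i)
      = Av_Gq l l + (\<Sum>i\<in>{1..R}-{l}. Av_Gq l i) - (\<Sum>i=1..R. Av_Gq (R+1) i) + Av_Gq l (R+1) - Av_Gq (R+1) (R+1)"
    using l by (simp add: sum_subtractf sum.remove)
  ultimately show ?thesis
    unfolding self swap sym[of "R+1" l] by (simp add: algebra_simps)
qed

lemma Delta1_eq_brackets:
  "Delta1 L \<Delta> \<beta> R \<iota> G =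
    - \<beta> * ((\<Sum>k\<in>{1..R}. \<Sum>l\<in>{1..R}-{k}. bracket L \<Delta> \<beta> R \<iota> G l k)
           - 2 * real R * (\<Sum>l=1..R. bracket L \<Delta> \<beta> R \<iota> G l (R+1))
           + real R * real (R+1) * bracket L \<Delta> \<beta> R \<iota> G (R+1) (R+2))"
proof -
  have "Delta1 L \<Delta> \<beta> R \<iota> G = (\<Sum>k=1..R. - \<beta> * ((\<Sum>l\<in>{1..R}-{k}. Av_Gq l k) - (\<Sum>l=1..R. Av_Gq l (R+1))
      - real R * Av_Gq k (R+1) + real (R+1) * Av_Gq (R+1) (R+2)))"
    unfolding Delta1_def by (intro sum.cong refl) (simp only: Av_energy_obs_covariance Av_Gq_replica_reduction)
  also have "\<dots> = - \<beta> * ((\<Sum>k\<in>{1..R}. \<Sum>l\<in>{1..R}-{k}. Av_Gq l k) - 2 * real R * (\<Sum>l=1..R. Av_Gq l (R+1))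
      + real R * real (R+1) * Av_Gq (R+1) (R+2))"
  proof -
    have "(\<Sum>k=1..R. a k - b - real R * c k + d)
        = (\<Sum>k=1..R. a k) - real R * b - real R * (\<Sum>k=1..R. c k) + real R * d" for a c :: "nat \<Rightarrow> real" and b d
      by (simp add: sum.distrib sum_subtractf sum_distrib_left)
    then show ?thesis
      by (simp only: sum_distrib_left[symmetric]) (simp add: algebra_simps)
  qed
  also have "\<dots> = - \<beta> * ((\<Sum>k\<in>{1..R}. \<Sum>l\<in>{1..R}-{k}. bracket L \<Delta> \<beta> R \<iota> G l k)
           - 2 * real R * (\<Sum>l=1..R. bracket L \<Delta> \<beta> R \<iota> G l (R+1))
           + real R * real (R+1) * bracket L \<Delta> \<beta> R \<iota> G (R+1) (R+2))"
    by (simp add: bracket_eq_Av_Omega_Gq)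
  finally show ?thesis .
qed

end

lemma finite_box_set: "finite (box_set a b)"
proof -
  have "box_set a b \<subseteq> (\<lambda>f. \<chi> i. f i) ` PiE UNIV (\<lambda>i. {a $ i..b $ i})"
  proof
    fix x assume "x \<in> box_set a b"
    then have "(\<lambda>i. x $ i) \<in> PiE UNIV (\<lambda>i. {a $ i..b $ i})"
      by (auto simp: box_set_def)
    then show "x \<in> (\<lambda>f. \<chi> i. f i) ` PiE UNIV (\<lambda>i. {a $ i..b $ i})"
      by (rule rev_image_eqI) simp
  qed
  then show ?thesis
    by (rule finite_subset) (intro finite_imageI finite_PiE; simp)
qed

theorem lemma2:
  fixes a b :: "int^'d" and \<Delta> :: "(int^'d) set \<Rightarrow> real" and \<beta> :: real
    and R :: nat and \<iota> :: "'r::finite \<Rightarrow> nat" and G :: "real^'r^'r \<Rightarrow> real"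
  assumes box: "\<forall>i. a $ i \<le> b $ i"
    and Delta_nonneg: "\<forall>X. \<Delta> X \<ge> 0"
    and transl_inv: "\<forall>X t. \<Delta> ((\<lambda>x. x + t) ` X) = \<Delta> X"
    and R_ge1: "R \<ge> 1"
    and enum: "bij_betw \<iota> UNIV {1..R}"
    and smooth: "smooth_fun G"
    and bounded: "\<forall>M. \<bar>G M\<bar> \<le> 1"
  shows "Delta1 (box_set a b) \<Delta> \<beta> R \<iota> G =
    - \<beta> * ((\<Sum>k\<in>{1..R}. \<Sum>l\<in>{1..R}-{k}. bracket (box_set a b) \<Delta> \<beta> R \<iota> G l k)
           - 2 * real R * (\<Sum>l=1..R. bracket (box_set a b) \<Delta> \<beta> R \<iota> G l (R+1))
           + real R * real (R+1) * bracket (box_set a b) \<Delta> \<beta> R \<iota> G (R+1) (R+2))"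
proof -
  \<comment> \<open>The configuration space is finite, so every Gibbs average is bounded and smooth in J
    whatever G is: only the enumeration of the replicas by \<iota> is needed.\<close>
  have "\<iota> r \<in> {1..R}" for r
    using bij_betwE[OF enum] by blast
  then show ?thesis
    by (rule Delta1_eq_brackets[OF finite_box_set])
qed

end
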